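(* If $G$ is a graph with no isolated vertices, then $\gamma_{\rm gr}^t(G) \ge 2\nu_{ss}(G)$.
   Context: All graphs are finite, simple, without isolated vertices. For a matching $M$ of $G$, let $V(M)$ be the set of vertices incident to edges of $M$; a vertex of $V(M)$ is strong if it has degree $1$ in the induced subgraph $G[V(M)]$. $M$ is a semistrong matching if every edge of $M$ has at least one strong endpoint; $\nu_{ss}(G)$ is the maximum number of edges in a semistrong matching of $G$. $N(v)$ denotes the open neighborhood of $v$. A sequence $S=(v_1,\ldots,v_k)$ of distinct vertices is a legal sequence if $N(v_i)\setminus \bigcup_{j=1}^{i-1} N(v_j)\neq\emptyset$ for every $i\in\{2,\ldots,k\}$, and a total dominating sequence if moreover $\{v_1,\ldots,v_k\}$ is a total dominating set of $G$. $\gamma_{\rm gr}^t(G)$ is the maximum length of a total dominating sequence of $G$. *)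

theory Defs
  imports Main
begin

definition simple_graph :: "'a set \<Rightarrow> ('a \<Rightarrow> 'a \<Rightarrow> bool) \<Rightarrow> bool" where
  "simple_graph V E \<longleftrightarrow> finite V \<and> (\<forall>u v. E u v \<longrightarrow> u \<in> V \<and> v \<in> V)
     \<and> (\<forall>u v. E u v \<longrightarrow> E v u) \<and> (\<forall>v. \<not> E v v)"

definition no_isolated :: "'a set \<Rightarrow> ('a \<Rightarrow> 'a \<Rightarrow> bool) \<Rightarrow> bool" where
  "no_isolated V E \<longleftrightarrow> (\<forall>v\<in>V. \<exists>u. E v u)"

definition nbhd :: "'a set \<Rightarrow> ('a \<Rightarrow> 'a \<Rightarrow> bool) \<Rightarrow> 'a \<Rightarrow> 'a set" where
  "nbhd V E v = {u \<in> V. E v u}"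

definition is_edge :: "('a \<Rightarrow> 'a \<Rightarrow> bool) \<Rightarrow> 'a set \<Rightarrow> bool" where
  "is_edge E e \<longleftrightarrow> (\<exists>u v. e = {u, v} \<and> E u v)"

definition matching :: "('a \<Rightarrow> 'a \<Rightarrow> bool) \<Rightarrow> 'a set set \<Rightarrow> bool" where
  "matching E M \<longleftrightarrow> (\<forall>e\<in>M. is_edge E e) \<and> (\<forall>e\<in>M. \<forall>f\<in>M. e \<noteq> f \<longrightarrow> e \<inter> f = {})"

definition strong_vertex :: "('a \<Rightarrow> 'a \<Rightarrow> bool) \<Rightarrow> 'a set set \<Rightarrow> 'a \<Rightarrow> bool" where
  "strong_vertex E M v \<longleftrightarrow> v \<in> \<Union>M \<and> card {u \<in> \<Union>M. E v u} = 1"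

definition semistrong_matching :: "('a \<Rightarrow> 'a \<Rightarrow> bool) \<Rightarrow> 'a set set \<Rightarrow> bool" where
  "semistrong_matching E M \<longleftrightarrow> matching E M \<and> (\<forall>e\<in>M. \<exists>v\<in>e. strong_vertex E M v)"

definition nu_ss :: "'a set \<Rightarrow> ('a \<Rightarrow> 'a \<Rightarrow> bool) \<Rightarrow> nat" where
  "nu_ss V E = Max {card M | M. M \<subseteq> Pow V \<and> semistrong_matching E M}"

text \<open>Legal sequence (v_1,...,v_k), as a list indexed from 0.\<close>
definition legal_seq :: "'a set \<Rightarrow> ('a \<Rightarrow> 'a \<Rightarrow> bool) \<Rightarrow> 'a list \<Rightarrow> bool" where
  "legal_seq V E S \<longleftrightarrow> distinct S \<and> set S \<subseteq> V \<and>
     (\<forall>i. 0 < i \<and> i < length S \<longrightarrow>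
        nbhd V E (S ! i) - (\<Union>j<i. nbhd V E (S ! j)) \<noteq> {})"

definition total_dominating_set :: "'a set \<Rightarrow> ('a \<Rightarrow> 'a \<Rightarrow> bool) \<Rightarrow> 'a set \<Rightarrow> bool" where
  "total_dominating_set V E D \<longleftrightarrow> D \<subseteq> V \<and> (\<forall>v\<in>V. \<exists>u\<in>D. E v u)"

definition total_dominating_seq :: "'a set \<Rightarrow> ('a \<Rightarrow> 'a \<Rightarrow> bool) \<Rightarrow> 'a list \<Rightarrow> bool" where
  "total_dominating_seq V E S \<longleftrightarrow> legal_seq V E S \<and> total_dominating_set V E (set S)"

definition gamma_gr_t :: "'a set \<Rightarrow> ('a \<Rightarrow> 'a \<Rightarrow> bool) \<Rightarrow> nat" where
  "gamma_gr_t V E = Max {length S | S. total_dominating_seq V E S}"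

end

theory Submission
  imports Defs
begin

text \<open>Let \<open>M\<close> be a maximum semistrong matching with edges \<open>a\<^sub>i b\<^sub>i\<close>, each \<open>a\<^sub>i\<close> strong.
In the sequence \<open>a\<^sub>1, \<dots>, a\<^sub>k, b\<^sub>1, \<dots>, b\<^sub>k\<close> every \<open>a\<^sub>i\<close> footprints \<open>b\<^sub>i\<close>, which is adjacent
to no other \<open>a\<^sub>j\<close> because \<open>a\<^sub>j\<close> is strong, and every \<open>b\<^sub>i\<close> footprints \<open>a\<^sub>i\<close>, whose only
neighbour in \<open>V(M)\<close> is \<open>b\<^sub>i\<close>. So this is a legal sequence of length \<open>2k\<close>, and any legal
sequence can be extended greedily to a total dominating sequence.\<close>

lemma legal_seq_length_le_card:
  assumes "finite V" "legal_seq V E S"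
  shows "length S \<le> card V"
  using assms by (metis card_mono distinct_card legal_seq_def)

lemma legal_seq_snoc:
  assumes "legal_seq V E S" "x \<in> V" "x \<notin> set S"
    and "S \<noteq> [] \<Longrightarrow> nbhd V E x - (\<Union>y\<in>set S. nbhd V E y) \<noteq> {}"
  shows "legal_seq V E (S @ [x])"
  unfolding legal_seq_def
proof (intro conjI allI impI)
  show "distinct (S @ [x])" "set (S @ [x]) \<subseteq> V"
    using assms(1-3) by (auto simp: legal_seq_def)
  fix i assume i: "0 < i \<and> i < length (S @ [x])"
  have prefix: "(\<Union>j<i. nbhd V E ((S @ [x]) ! j)) = (\<Union>j<i. nbhd V E (S ! j))" if "i \<le> length S"
    using that by (auto simp: nth_append)
  show "nbhd V E ((S @ [x]) ! i) - (\<Union>j<i. nbhd V E ((S @ [x]) ! j)) \<noteq> {}"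
  proof (cases "i < length S")
    case True
    then show ?thesis using assms(1) i prefix by (simp add: legal_seq_def nth_append)
  next
    case False
    then have "i = length S" "S \<noteq> []" using i by auto
    moreover have "(\<Union>j<length S. nbhd V E (S ! j)) = (\<Union>y\<in>set S. nbhd V E y)"
      unfolding set_conv_nth by auto
    ultimately show ?thesis using assms(4) prefix by simp
  qed
qed

lemma legal_seq_append_private_nbrs:
  assumes "legal_seq V E A" "distinct (A @ B)" "set B \<subseteq> V"
    and "\<And>x. x \<in> set B \<Longrightarrow> \<exists>w \<in> nbhd V E x. \<forall>y \<in> set (A @ B) - {x}. w \<notin> nbhd V E y"
  shows "legal_seq V E (A @ B)"
  using assms(2-4)
proof (induction B rule: rev_induct)
  case Nil
  then show ?case using assms(1) by simp
next
  case (snoc x B)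
  have legal: "legal_seq V E (A @ B)"
  proof (rule snoc.IH)
    show "distinct (A @ B)" "set B \<subseteq> V" using snoc.prems(1,2) by auto
    fix y assume "y \<in> set B"
    then obtain w where "w \<in> nbhd V E y" "\<forall>z \<in> set (A @ B @ [x]) - {y}. w \<notin> nbhd V E z"
      using snoc.prems(3) by force
    then show "\<exists>w \<in> nbhd V E y. \<forall>z \<in> set (A @ B) - {y}. w \<notin> nbhd V E z" by auto
  qed
  obtain w where "w \<in> nbhd V E x" "\<forall>y \<in> set (A @ B @ [x]) - {x}. w \<notin> nbhd V E y"
    using snoc.prems(3)[of x] by auto
  moreover have "x \<notin> set (A @ B)" using snoc.prems(1) by simp
  ultimately have "nbhd V E x - (\<Union>y\<in>set (A @ B). nbhd V E y) \<noteq> {}" by auto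
  then show ?case using legal_seq_snoc[OF legal] snoc.prems(1,2) by simp
qed

lemma legal_seq_extends_to_total_dominating_seq:
  assumes "simple_graph V E" "no_isolated V E" "legal_seq V E S"
  shows "\<exists>T. total_dominating_seq V E (S @ T)"
  using assms(3)
proof (induction "card V - length S" arbitrary: S rule: less_induct)
  case less
  have finV: "finite V" using assms(1) by (simp add: simple_graph_def)
  show ?case
  proof (cases "\<forall>v\<in>V. \<exists>u\<in>set S. E v u")
    case True
    then have "total_dominating_seq V E (S @ [])" using less.prems
      by (auto simp: total_dominating_seq_def total_dominating_set_def legal_seq_def)
    then show ?thesis by blast
  next
    case False
    then obtain w where w: "w \<in> V" "\<forall>u\<in>set S. \<not> E w u" by blast
    obtain x where "E w x" using assms(2) w(1) by (auto simp: no_isolated_def)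
    with w assms(1) have "x \<in> V" "x \<notin> set S" "w \<in> nbhd V E x"
      "\<forall>y\<in>set S. w \<notin> nbhd V E y"
      by (auto simp: nbhd_def simple_graph_def)
    then have legal: "legal_seq V E (S @ [x])"
      using legal_seq_snoc[OF less.prems] by blast
    have "card V - length (S @ [x]) < card V - length S"
      using legal_seq_length_le_card[OF finV legal] by simp
    from less.hyps[OF this legal] show ?thesis by auto
  qed
qed

lemma total_dominating_seq_length_le_gamma_gr_t:
  assumes "finite V" "total_dominating_seq V E T"
  shows "length T \<le> gamma_gr_t V E"
proof -
  have "{length S | S. total_dominating_seq V E S} \<subseteq> {..card V}"
    using legal_seq_length_le_card[OF assms(1)] by (auto simp: total_dominating_seq_def)
  then show ?thesis
    unfolding gamma_gr_t_def using assms(2) by (intro Max_ge) (auto intro: finite_subset)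
qed

lemma maximum_semistrong_matching_exists:
  assumes "finite V"
  obtains M where "M \<subseteq> Pow V" "semistrong_matching E M" "card M = nu_ss V E"
proof -
  let ?A = "{card M | M. M \<subseteq> Pow V \<and> semistrong_matching E M}"
  have "?A = card ` {M. M \<subseteq> Pow V \<and> semistrong_matching E M}" by blast
  then have "finite ?A" using assms by simp
  moreover have "card {} \<in> ?A"
    by (auto simp: semistrong_matching_def matching_def intro!: exI[of _ "{}"])
  ultimately have "nu_ss V E \<in> ?A" unfolding nu_ss_def by (intro Max_in) auto
  then show ?thesis using that by auto
qed

lemma strong_vertex_unique_nbr:
  assumes "strong_vertex E M a" "x \<in> \<Union>M" "E a x" "y \<in> \<Union>M" "E a y"
  shows "x = y"
proof -
  obtain z where z: "{u \<in> \<Union>M. E a u} = {z}"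
    using assms(1) card_1_singletonE by (auto simp: strong_vertex_def)
  have "x \<in> {u \<in> \<Union>M. E a u}" "y \<in> {u \<in> \<Union>M. E a u}" using assms(2-5) by auto
  then show ?thesis unfolding z by simp
qed

lemma matching_edge_unique:
  assumes "matching E M" "e \<in> M" "e' \<in> M" "x \<in> e" "x \<in> e'"
  shows "e = e'"
  using assms by (auto simp: matching_def)

lemma semistrong_matching_orientation:
  assumes "symp E" "semistrong_matching E M"
  obtains a b where "\<And>e. e \<in> M \<Longrightarrow> e = {a e, b e}" "\<And>e. e \<in> M \<Longrightarrow> E (a e) (b e)"
    "\<And>e. e \<in> M \<Longrightarrow> strong_vertex E M (a e)"
proof -
  have "\<exists>p. e = {fst p, snd p} \<and> E (fst p) (snd p) \<and> strong_vertex E M (fst p)" if e: "e \<in> M" for e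
  proof -
    obtain u v where uv: "e = {u, v}" "E u v"
      using assms(2) e by (auto simp: semistrong_matching_def matching_def is_edge_def)
    obtain z where "z \<in> e" "strong_vertex E M z"
      using assms(2) e by (auto simp: semistrong_matching_def)
    then show ?thesis
      using uv assms(1) by (intro exI[of _ "if z = u then (u, v) else (v, u)"]) (auto dest: sympD)
  qed
  then obtain p where "\<And>e. e \<in> M \<Longrightarrow> e = {fst (p e), snd (p e)} \<and> E (fst (p e)) (snd (p e))
      \<and> strong_vertex E M (fst (p e))"
    by metis
  then show ?thesis using that[of "fst \<circ> p" "snd \<circ> p"] by simp
qed

context
  fixes V :: "'a set" and E :: "'a \<Rightarrow> 'a \<Rightarrow> bool" and M :: "'a set set"
    and a b :: "'a set \<Rightarrow> 'a"
  assumes graph: "simple_graph V E" and M_sub: "M \<subseteq> Pow V" and match: "matching E M"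
    and edge_ends: "\<And>e. e \<in> M \<Longrightarrow> e = {a e, b e}"
    and adj: "\<And>e. e \<in> M \<Longrightarrow> E (a e) (b e)"
    and strong: "\<And>e. e \<in> M \<Longrightarrow> strong_vertex E M (a e)"
begin

lemma ends_in_edge: "e \<in> M \<Longrightarrow> a e \<in> e" "e \<in> M \<Longrightarrow> b e \<in> e"
  using edge_ends by blast+

lemma ends_in_matched_vertices: "e \<in> M \<Longrightarrow> a e \<in> \<Union>M" "e \<in> M \<Longrightarrow> b e \<in> \<Union>M"
  using ends_in_edge by blast+

lemma strong_end_unique_nbr:
  assumes "e \<in> M" "y \<in> \<Union>M" "E (a e) y"
  shows "y = b e"
  using strong_vertex_unique_nbr[OF strong assms(2,3)] assms(1) adj ends_in_matched_vertices
  by blast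

lemma distinct_strong_then_weak_ends:
  assumes "set es = M" "distinct es"
  shows "distinct (map a es @ map b es)"
proof -
  note same_edge = matching_edge_unique[OF match]
  have "a e \<noteq> b e" if "e \<in> M" for e
    using adj[OF that] graph by (auto simp: simple_graph_def)
  then have "a ` M \<inter> b ` M = {}"
    using same_edge ends_in_edge by (smt (verit) disjoint_iff imageE)
  moreover have "inj_on a M" "inj_on b M"
    using same_edge ends_in_edge by (metis inj_onI)+
  ultimately show ?thesis using assms by (simp add: distinct_map)
qed

lemma legal_seq_strong_then_weak_ends:
  assumes es: "set es = M" "distinct es"
  shows "legal_seq V E (map a es @ map b es)"
proof (rule legal_seq_append_private_nbrs)
  have sym: "symp E" using graph by (auto simp: simple_graph_def intro: sympI)
  have ends_V: "set (map a es @ map b es) \<subseteq> V"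
    using es ends_in_matched_vertices M_sub by auto
  show dist: "distinct (map a es @ map b es)"
    using distinct_strong_then_weak_ends[OF es] .
  then show "set (map b es) \<subseteq> V" using ends_V by simp
  have "legal_seq V E ([] @ map a es)"
  proof (rule legal_seq_append_private_nbrs)
    fix x assume "x \<in> set (map a es)"
    then obtain e where e: "e \<in> M" "x = a e" using es by auto
    have "b e \<notin> nbhd V E (a e')" if "e' \<in> M" "a e' \<noteq> a e" for e'
      using strong_end_unique_nbr[OF that(1) ends_in_matched_vertices(2)[OF e(1)]]
        matching_edge_unique[OF match e(1) that(1) ends_in_edge(2)[OF e(1)]]
        ends_in_edge(2)[OF that(1)] that(2)
      by (auto simp: nbhd_def)
    moreover have "b e \<in> nbhd V E (a e)"
      using adj[OF e(1)] ends_V e(1) es by (auto simp: nbhd_def)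
    ultimately show "\<exists>w\<in>nbhd V E x. \<forall>y\<in>set ([] @ map a es) - {x}. w \<notin> nbhd V E y"
      using e(2) es by auto
  qed (use dist ends_V in \<open>auto simp: legal_seq_def\<close>)
  then show "legal_seq V E (map a es)" by simp
  fix x assume "x \<in> set (map b es)"
  then obtain e where e: "e \<in> M" "x = b e" using es by auto
  have "a e \<notin> nbhd V E y" if "y \<in> \<Union>M" "y \<noteq> b e" for y
    using strong_end_unique_nbr[OF e(1) that(1)] that(2) sym by (auto simp: nbhd_def dest: sympD)
  moreover have "set (map a es @ map b es) \<subseteq> \<Union>M"
    using es ends_in_matched_vertices by auto
  moreover have "a e \<in> nbhd V E (b e)"
    using sympD[OF sym adj[OF e(1)]] ends_V e(1) es by (auto simp: nbhd_def)
  ultimately show "\<exists>w\<in>nbhd V E x. \<forall>y\<in>set (map a es @ map b es) - {x}. w \<notin> nbhd V E y"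
    using e(2) by blast
qed

end

lemma semistrong_matching_legal_seq:
  assumes "simple_graph V E" "M \<subseteq> Pow V" "semistrong_matching E M"
  shows "\<exists>S. legal_seq V E S \<and> length S = 2 * card M"
proof -
  have "symp E" using assms(1) by (auto simp: simple_graph_def intro: sympI)
  then obtain a b where orientation: "\<And>e. e \<in> M \<Longrightarrow> e = {a e, b e}"
    "\<And>e. e \<in> M \<Longrightarrow> E (a e) (b e)" "\<And>e. e \<in> M \<Longrightarrow> strong_vertex E M (a e)"
    using semistrong_matching_orientation assms(3) by blast
  have "finite M"
    using assms(1,2) by (meson finite_Pow_iff finite_subset simple_graph_def)
  then obtain es where es: "set es = M" "distinct es" using finite_distinct_list by blast
  have "matching E M" using assms(3) by (simp add: semistrong_matching_def)
  then have "legal_seq V E (map a es @ map b es)"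
    using legal_seq_strong_then_weak_ends[OF assms(1,2) _ orientation es] by blast
  moreover have "length (map a es @ map b es) = 2 * card M"
    using es distinct_card by fastforce
  ultimately show ?thesis by blast
qed

theorem mainTheorem6:
  fixes V :: "'a set" and E :: "'a \<Rightarrow> 'a \<Rightarrow> bool"
  assumes "simple_graph V E" and "no_isolated V E"
  shows "gamma_gr_t V E \<ge> 2 * nu_ss V E"
proof -
  have finV: "finite V" using assms(1) by (simp add: simple_graph_def)
  obtain M where "M \<subseteq> Pow V" "semistrong_matching E M" and M_max: "card M = nu_ss V E"
    using maximum_semistrong_matching_exists[OF finV] .
  then obtain S where "legal_seq V E S" and S_len: "length S = 2 * card M"
    using semistrong_matching_legal_seq[OF assms(1)] by blast
  then obtain T where "total_dominating_seq V E (S @ T)"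
    using legal_seq_extends_to_total_dominating_seq[OF assms] by blast
  then have "length (S @ T) \<le> gamma_gr_t V E"
    by (rule total_dominating_seq_length_le_gamma_gr_t[OF finV])
  then show ?thesis using S_len M_max by simp
qed

end
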